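(* Let $p_1,\dots,p_5$ be the vertices of a regular simplex in $\mathbb{E}^4$ with edge length $\sqrt2$. Then the minimum radius of a circumscribing cylinder of this simplex is $\sqrt{49/80}=\frac{7\sqrt5}{20}\approx0.7826$, and it is attained by a cylinder whose axis is parallel to $p_2+p_3-p_4-p_5$ (and, by symmetry, to any vector obtained by permuting the vertices).
   Context: A cylinder in $\mathbb{E}^n$ is the set of points at fixed distance $\rho>0$ (its radius) from a line (its axis). A cylinder is circumscribing for a simplex if all vertices of the simplex lie on it. *)

theory Defs
  imports "HOL-Analysis.Analysis"
begin

definition line_through :: "'a::real_normed_vector \<Rightarrow> 'a \<Rightarrow> 'a set" where
  "line_through a d = {a + t *\<^sub>R d | t. True}"

definition cylinder :: "'a::real_normed_vector \<Rightarrow> 'a \<Rightarrow> real \<Rightarrow> 'a set" where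
  "cylinder a d \<rho> = {x. infdist x (line_through a d) = \<rho>}"

definition circumscribing_cylinder ::
  "'i set \<Rightarrow> ('i \<Rightarrow> 'a::real_normed_vector) \<Rightarrow> 'a \<Rightarrow> 'a \<Rightarrow> real \<Rightarrow> bool" where
  "circumscribing_cylinder V p a d \<rho> \<longleftrightarrow>
     d \<noteq> 0 \<and> \<rho> > 0 \<and> (\<forall>i\<in>V. p i \<in> cylinder a d \<rho>)"

end

(*
  Write points in barycentric coordinates b and directions as sum-zero
  combinations s of the vertices. Because all edges have length sqrt 2, the map
  s |-> (SUM i. s i *R p i) on sum-zero vectors of R^5 is an isometry, so the squared
  distance of p k from the axis through (SUM i. b i *R p i) with unit direction
  (SUM i. s i *R p i) is 1 - 2 b_k + |b|^2 - (s_k - b.s)^2.  Equating these five values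
  forces SUM s_i^3 = 0 and rho^2 = 11/20 + (SUM s_i^4) / 4.  Of five numbers at most two
  are positive or at most two are negative; with SUM s = SUM s^3 = 0 and SUM s^2 = 1,
  Cauchy-Schwarz on the positive and negative parts gives SUM s^4 >= 1/4, hence
  rho^2 >= 49/80, with equality for s = (0, 1/2, 1/2, -1/2, -1/2).
*)
theory Submission
  imports Defs
begin

lemma line_through_scaleR:
  assumes "c \<noteq> 0"
  shows "line_through a (c *\<^sub>R d) = line_through a d"
proof -
  have "a + t *\<^sub>R d = a + (t / c) *\<^sub>R (c *\<^sub>R d)" for t
    using assms by simp
  then show ?thesis
    unfolding line_through_def by (metis (no_types, lifting) scaleR_scaleR)
qed

lemma infdist_line_through_unit:
  fixes x a u :: "'a::real_inner"
  assumes "norm u = 1"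
  shows "(infdist x (line_through a u))\<^sup>2 = (norm (x - a))\<^sup>2 - ((x - a) \<bullet> u)\<^sup>2"
proof -
  define foot where "foot = a + ((x - a) \<bullet> u) *\<^sub>R u"
  have uu: "u \<bullet> u = 1"
    using assms by (simp add: dot_square_norm)
  have pythagoras: "(dist x (a + t *\<^sub>R u))\<^sup>2 = (dist x foot)\<^sup>2 + (t - (x - a) \<bullet> u)\<^sup>2" for t
    unfolding foot_def dist_norm power2_norm_eq_inner
    by (simp add: algebra_simps inner_diff_left inner_diff_right inner_commute uu power2_eq_square)
  have foot_on: "foot \<in> line_through a u"
    unfolding foot_def line_through_def by auto
  then have line_nonempty: "line_through a u \<noteq> {}"
    by auto
  have "infdist x (line_through a u) = dist x foot"
  proof (rule antisym)
    show "infdist x (line_through a u) \<le> dist x foot"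
      using foot_on by (rule infdist_le)
    show "dist x foot \<le> infdist x (line_through a u)"
      unfolding infdist_notempty[OF line_nonempty]
    proof (rule cINF_greatest)
      fix y assume "y \<in> line_through a u"
      then obtain t where "y = a + t *\<^sub>R u"
        unfolding line_through_def by auto
      then have "(dist x foot)\<^sup>2 \<le> (dist x y)\<^sup>2"
        using pythagoras[of t] by simp
      then show "dist x foot \<le> dist x y"
        by simp
    qed (use foot_on in auto)
  qed
  moreover have "(dist x foot)\<^sup>2 = (norm (x - a))\<^sup>2 - ((x - a) \<bullet> u)\<^sup>2"
    using pythagoras[of 0] by (simp add: dist_norm)
  ultimately show ?thesis by simp
qed

definition regular_simplex_sqrt2 :: "'i set \<Rightarrow> ('i \<Rightarrow> 'a::real_normed_vector) \<Rightarrow> bool" where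
  "regular_simplex_sqrt2 I p \<longleftrightarrow> (\<forall>i\<in>I. \<forall>j\<in>I. i \<noteq> j \<longrightarrow> dist (p i) (p j) = sqrt 2)"

lemma inner_sum_regular_simplex:
  fixes p :: "'i \<Rightarrow> 'a::real_inner"
  assumes "finite I" "regular_simplex_sqrt2 I p" "sum \<mu> I = 0" "sum \<nu> I = 0"
  shows "(\<Sum>i\<in>I. \<mu> i *\<^sub>R p i) \<bullet> (\<Sum>j\<in>I. \<nu> j *\<^sub>R p j) = (\<Sum>i\<in>I. \<mu> i * \<nu> i)"
proof -
  define h where "h i = (p i \<bullet> p i) / 2" for i
  have gram: "p i \<bullet> p j = (h i - 1) + h j + (if i = j then 1 else 0)" if "i \<in> I" "j \<in> I" for i j
  proof (cases "i = j")
    case False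
    then have "(p i - p j) \<bullet> (p i - p j) = 2"
      using assms(2) that by (simp add: regular_simplex_sqrt2_def dist_norm flip: power2_norm_eq_inner)
    then show ?thesis
      using False by (simp add: h_def inner_diff_left inner_diff_right inner_commute)
  qed (simp add: h_def)
  have row: "\<mu> i *\<^sub>R p i \<bullet> (\<Sum>j\<in>I. \<nu> j *\<^sub>R p j) = \<mu> i * (\<Sum>j\<in>I. \<nu> j * h j) + \<mu> i * \<nu> i"
    if "i \<in> I" for i
  proof -
    have "\<mu> i *\<^sub>R p i \<bullet> (\<Sum>j\<in>I. \<nu> j *\<^sub>R p j)
        = (\<Sum>j\<in>I. \<mu> i * (h i - 1) * \<nu> j + \<mu> i * (\<nu> j * h j) + (if i = j then \<mu> i * \<nu> i else 0))"
      unfolding inner_sum_right by (rule sum.cong) (auto simp: gram that algebra_simps)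
    also have "\<dots> = \<mu> i * (h i - 1) * sum \<nu> I + \<mu> i * (\<Sum>j\<in>I. \<nu> j * h j) + \<mu> i * \<nu> i"
      using assms(1) that by (simp add: sum.distrib flip: sum_distrib_left)
    finally show ?thesis
      using assms(4) by simp
  qed
  have "(\<Sum>i\<in>I. \<mu> i *\<^sub>R p i) \<bullet> (\<Sum>j\<in>I. \<nu> j *\<^sub>R p j)
      = sum \<mu> I * (\<Sum>j\<in>I. \<nu> j * h j) + (\<Sum>i\<in>I. \<mu> i * \<nu> i)"
    unfolding inner_sum_left by (simp add: row sum.distrib sum_distrib_right del: inner_scaleR_left)
  then show ?thesis
    using assms(3) by simp
qed

lemma regular_simplex_inj_on:
  assumes "regular_simplex_sqrt2 I p"
  shows "inj_on p I"
  using assms unfolding regular_simplex_sqrt2_def inj_on_def by force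

lemma regular_simplex_affine_independent:
  fixes p :: "'i \<Rightarrow> 'a::real_inner"
  assumes "finite I" "regular_simplex_sqrt2 I p"
  shows "\<not> affine_dependent (p ` I)"
proof
  assume "affine_dependent (p ` I)"
  then obtain U where U: "sum U (p ` I) = 0" "\<exists>v\<in>p ` I. U v \<noteq> 0" "(\<Sum>v\<in>p ` I. U v *\<^sub>R v) = 0"
    using assms(1) by (auto simp: affine_dependent_explicit_finite)
  have inj: "inj_on p I"
    using assms(2) by (rule regular_simplex_inj_on)
  define \<mu> where "\<mu> = U \<circ> p"
  have "sum \<mu> I = 0" "(\<Sum>i\<in>I. \<mu> i *\<^sub>R p i) = 0"
    using U(1,3) by (simp_all add: \<mu>_def sum.reindex[OF inj])
  then have "(\<Sum>i\<in>I. \<mu> i * \<mu> i) = 0"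
    using inner_sum_regular_simplex[OF assms, of \<mu> \<mu>] by simp
  then have "\<forall>i\<in>I. \<mu> i = 0"
    using assms(1) by (simp add: sum_nonneg_eq_0_iff)
  then show False
    using U(2) by (auto simp: \<mu>_def)
qed

lemma regular_simplex_barycentric:
  fixes p :: "'i \<Rightarrow> 'a::euclidean_space"
  assumes "finite I" "card I = DIM('a) + 1" "regular_simplex_sqrt2 I p"
  obtains b where "sum b I = 1" "x = (\<Sum>i\<in>I. b i *\<^sub>R p i)"
proof -
  have inj: "inj_on p I"
    using assms(3) by (rule regular_simplex_inj_on)
  have "affine hull (p ` I) = UNIV"
    using assms inj
    by (intro affine_independent_span_eq regular_simplex_affine_independent) (simp_all add: card_image)
  then obtain U where "sum U (p ` I) = 1" "(\<Sum>v\<in>p ` I. U v *\<^sub>R v) = x"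
    using assms(1) by (auto simp: affine_hull_finite)
  then show ?thesis
    by (intro that[of "U \<circ> p"]) (simp_all add: sum.reindex[OF inj])
qed

lemma infdist_vertex_barycentric:
  fixes p :: "'i \<Rightarrow> 'a::real_inner"
  assumes "finite I" "regular_simplex_sqrt2 I p" "k \<in> I"
    and "sum b I = 1" "sum s I = 0" "(\<Sum>i\<in>I. (s i)\<^sup>2) = 1"
  shows "(infdist (p k) (line_through (\<Sum>i\<in>I. b i *\<^sub>R p i) (\<Sum>i\<in>I. s i *\<^sub>R p i)))\<^sup>2
      = 1 - 2 * b k + (\<Sum>i\<in>I. (b i)\<^sup>2) - (s k - (\<Sum>i\<in>I. b i * s i))\<^sup>2"
proof -
  define e where "e i = (if i = k then 1 else 0) - b i" for i
  have e_sum: "sum e I = 0"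
    using assms by (simp add: e_def sum_subtractf)
  have e_vertex: "p k - (\<Sum>i\<in>I. b i *\<^sub>R p i) = (\<Sum>i\<in>I. e i *\<^sub>R p i)"
  proof -
    have "(\<Sum>i\<in>I. (if i = k then 1 else 0) *\<^sub>R p i) = p k"
      using assms(1,3) by (simp add: if_distrib[of "\<lambda>c. c *\<^sub>R _"] sum.delta cong: if_cong)
    then show ?thesis
      by (simp add: e_def scaleR_diff_left sum_subtractf)
  qed
  have "(\<Sum>i\<in>I. s i *\<^sub>R p i) \<bullet> (\<Sum>i\<in>I. s i *\<^sub>R p i) = 1"
    using inner_sum_regular_simplex[OF assms(1,2,5,5)] assms(6) by (simp add: power2_eq_square)
  then have unit: "norm (\<Sum>i\<in>I. s i *\<^sub>R p i) = 1"
    by (simp add: norm_eq_sqrt_inner)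
  have "(norm (\<Sum>i\<in>I. e i *\<^sub>R p i))\<^sup>2 = (\<Sum>i\<in>I. e i * e i)"
    using inner_sum_regular_simplex[OF assms(1,2) e_sum e_sum] by (simp add: power2_norm_eq_inner)
  also have "\<dots> = (\<Sum>i\<in>I. (if i = k then 1 else 0) - 2 * (if i = k then b i else 0) + (b i)\<^sup>2)"
    by (rule sum.cong) (auto simp: e_def power2_eq_square algebra_simps)
  also have "\<dots> = 1 - 2 * b k + (\<Sum>i\<in>I. (b i)\<^sup>2)"
    using assms(1,3) by (simp add: sum.distrib sum_subtractf flip: sum_distrib_left)
  finally have norm_e: "(norm (\<Sum>i\<in>I. e i *\<^sub>R p i))\<^sup>2 = 1 - 2 * b k + (\<Sum>i\<in>I. (b i)\<^sup>2)" .
  have "(\<Sum>i\<in>I. e i *\<^sub>R p i) \<bullet> (\<Sum>i\<in>I. s i *\<^sub>R p i) = (\<Sum>i\<in>I. e i * s i)"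
    using inner_sum_regular_simplex[OF assms(1,2) e_sum assms(5)] .
  also have "\<dots> = (\<Sum>i\<in>I. (if i = k then s i else 0) - b i * s i)"
    by (rule sum.cong) (auto simp: e_def algebra_simps)
  also have "\<dots> = s k - (\<Sum>i\<in>I. b i * s i)"
    using assms(1,3) by (simp add: sum_subtractf)
  finally show ?thesis
    using infdist_line_through_unit[OF unit] norm_e by (simp add: e_vertex)
qed

lemma cylinder_radius_identities:
  fixes b s :: "'i \<Rightarrow> real"
  assumes "finite I" "I \<noteq> {}" "sum b I = 1" "sum s I = 0" "(\<Sum>i\<in>I. (s i)\<^sup>2) = 1"
    and on_cylinder: "\<And>k. k \<in> I \<Longrightarrow> r = 1 - 2 * b k + (\<Sum>i\<in>I. (b i)\<^sup>2) - (s k - (\<Sum>i\<in>I. b i * s i))\<^sup>2"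
  shows "(\<Sum>i\<in>I. (s i)^3) = 0" "r = 1 - 9 / (4 * card I) + (\<Sum>i\<in>I. (s i)^4) / 4"
proof -
  define n where "n = real (card I)"
  define L where "L = (\<Sum>i\<in>I. (b i)\<^sup>2)"
  define \<beta> where "\<beta> = (\<Sum>i\<in>I. b i * s i)"
  have n: "n > 0"
    using assms(1,2) by (simp add: n_def card_gt_0_iff)
  have "n * r = (\<Sum>k\<in>I. r)"
    by (simp add: n_def)
  also have "\<dots> = (\<Sum>k\<in>I. 1 - 2 * b k + L - ((s k)\<^sup>2 - 2 * \<beta> * s k + \<beta>\<^sup>2))"
    by (rule sum.cong) (simp_all add: on_cylinder L_def \<beta>_def power2_diff)
  also have "\<dots> = n - 2 + n * L - (1 + n * \<beta>\<^sup>2)"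
    using assms(3-5) by (simp add: n_def sum.distrib sum_subtractf flip: sum_distrib_left)
  finally have r_mean: "r = 1 - 3 / n + L - \<beta>\<^sup>2"
    using n by (simp add: field_simps)
  have defect: "b k - \<beta> * s k = (3 / n - (s k)\<^sup>2) / 2" if "k \<in> I" for k
    using on_cylinder[OF that] r_mean by (simp add: L_def \<beta>_def power2_diff algebra_simps)
  have "\<beta> - \<beta> * (\<Sum>k\<in>I. (s k)\<^sup>2) = (\<Sum>k\<in>I. s k * (b k - \<beta> * s k))"
    by (simp add: \<beta>_def algebra_simps power2_eq_square sum_subtractf sum_distrib_left)
  also have "\<dots> = (\<Sum>k\<in>I. 3 / (2 * n) * s k - (s k)^3 / 2)"
    by (rule sum.cong) (simp_all add: defect power2_eq_square power3_eq_cube field_simps)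
  also have "\<dots> = 3 / (2 * n) * sum s I - (\<Sum>k\<in>I. (s k)^3) / 2"
    by (simp add: sum_subtractf sum_distrib_left sum_divide_distrib)
  finally show "(\<Sum>i\<in>I. (s i)^3) = 0"
    using assms(4,5) by simp
  have "L - \<beta>\<^sup>2 = (\<Sum>k\<in>I. (b k)\<^sup>2 - 2 * \<beta> * (b k * s k) + \<beta>\<^sup>2 * (s k)\<^sup>2)"
    using assms(5) by (simp add: L_def \<beta>_def sum.distrib sum_subtractf power2_eq_square
        flip: sum_distrib_left)
  also have "\<dots> = (\<Sum>k\<in>I. (b k - \<beta> * s k)\<^sup>2)"
    by (rule sum.cong) (simp_all add: power2_diff power_mult_distrib algebra_simps)
  also have "\<dots> = (\<Sum>k\<in>I. 9 / (4 * n\<^sup>2) - 3 / (2 * n) * (s k)\<^sup>2 + (s k)^4 / 4)"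
    by (rule sum.cong) (simp_all add: defect power2_diff field_simps)
  also have "\<dots> = n * (9 / (4 * n\<^sup>2)) - 3 / (2 * n) * (\<Sum>k\<in>I. (s k)\<^sup>2) + (\<Sum>k\<in>I. (s k)^4) / 4"
    by (simp add: n_def sum.distrib sum_subtractf flip: sum_distrib_left sum_divide_distrib)
  finally have "L - \<beta>\<^sup>2 = 3 / (4 * n) + (\<Sum>k\<in>I. (s k)^4) / 4"
    using assms(5) n by (simp add: power2_eq_square)
  then show "r = 1 - 9 / (4 * card I) + (\<Sum>i\<in>I. (s i)^4) / 4"
    using r_mean by (simp add: n_def)
qed

lemma sum_power_square_le:
  fixes f :: "'i \<Rightarrow> real"
  assumes "\<forall>i\<in>I. f i \<ge> 0"
  shows "(\<Sum>i\<in>I. f i ^ (k + 1))\<^sup>2 \<le> (\<Sum>i\<in>I. f i ^ k) * (\<Sum>i\<in>I. f i ^ (k + 2))"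
proof -
  have "(\<Sum>i\<in>I. sqrt (f i ^ k) * sqrt (f i ^ (k + 2)))\<^sup>2
      \<le> (\<Sum>i\<in>I. (sqrt (f i ^ k))\<^sup>2) * (\<Sum>i\<in>I. (sqrt (f i ^ (k + 2)))\<^sup>2)"
    by (rule Cauchy_Schwarz_ineq_sum)
  moreover have "sqrt (f i ^ k) * sqrt (f i ^ (k + 2)) = f i ^ (k + 1)" if "i \<in> I" for i
  proof -
    have "f i ^ k * f i ^ (k + 2) = (f i ^ (k + 1))\<^sup>2"
      by (simp add: power_add power2_eq_square)
    then show ?thesis
      using assms that by (simp flip: real_sqrt_mult)
  qed
  ultimately show ?thesis
    using assms by simp
qed

text \<open>Here P, N are the sums of squares of the positive and negative parts of a vector,
  S their common sum of entries and T their common sum of cubes; the hypothesis on S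
  encodes that there are at most two positive entries.\<close>
lemma split_moments_mult_le:
  fixes P N S T :: real
  assumes "P \<ge> 0" "N \<ge> 0" "P + N = 1" "S\<^sup>2 \<le> 2 * P" "P\<^sup>2 \<le> S * T" "N\<^sup>2 \<le> S * T"
  shows "P * N \<le> 4 * T\<^sup>2"
proof -
  have fourth: "Q^4 \<le> 2 * P * T\<^sup>2" if "Q\<^sup>2 \<le> S * T" for Q
  proof -
    have "(Q\<^sup>2)\<^sup>2 \<le> (S * T)\<^sup>2"
      using that by (intro power_mono) auto
    also have "\<dots> \<le> 2 * P * T\<^sup>2"
      using assms(4) by (simp add: power_mult_distrib mult_right_mono)
    finally show ?thesis by simp
  qed
  have "P * (P * N) \<le> P * (4 * T\<^sup>2)"
  proof (cases "P \<ge> 1/2")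
    case True
    then have "N \<le> 2 * P\<^sup>2"
      using assms(3) power_mono[OF True, of 2] by (simp add: power_divide)
    then have "P\<^sup>2 * N \<le> P\<^sup>2 * (2 * P\<^sup>2)"
      by (simp add: mult_left_mono)
    then show ?thesis
      using fourth[OF assms(5)] by (simp add: power2_eq_square power4_eq_xxxx algebra_simps)
  next
    case False
    then have "1/2 \<le> N"
      using assms(3) by simp
    then have "P\<^sup>2 \<le> 2 * N^3"
      using assms(1,3) False power_mono[of "1/2" N 3] power_mono[of P "1/2" 2] by (simp add: power_divide)
    then have "P\<^sup>2 * N \<le> 2 * N^3 * N"
      using assms(2) by (rule mult_right_mono)
    then show ?thesis
      using fourth[OF assms(6)] by (simp add: power2_eq_square power3_eq_cube power4_eq_xxxx algebra_simps)
  qed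
  then show ?thesis
    using assms(1) by (cases "P = 0") simp_all
qed

lemma quarter_le_sum_fourth_power_two_positive:
  fixes s :: "'i \<Rightarrow> real"
  assumes "finite I" "card {i\<in>I. s i > 0} \<le> 2"
    and "sum s I = 0" "(\<Sum>i\<in>I. (s i)\<^sup>2) = 1" "(\<Sum>i\<in>I. (s i)^3) = 0"
  shows "1/4 \<le> (\<Sum>i\<in>I. (s i)^4)"
proof -
  define x where "x i = max (s i) 0" for i
  define y where "y i = max (- s i) 0" for i
  have nonneg: "\<forall>i\<in>I. x i \<ge> 0" "\<forall>i\<in>I. y i \<ge> 0"
    by (simp_all add: x_def y_def)
  have split: "s i = x i - y i" "(s i)\<^sup>2 = (x i)\<^sup>2 + (y i)\<^sup>2" "(s i)^3 = (x i)^3 - (y i)^3"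
    "(s i)^4 = (x i)^4 + (y i)^4" for i
    by (auto simp: x_def y_def max_def)
  define P where "P = (\<Sum>i\<in>I. (x i)\<^sup>2)"
  define N where "N = (\<Sum>i\<in>I. (y i)\<^sup>2)"
  define S where "S = (\<Sum>i\<in>I. x i)"
  define T where "T = (\<Sum>i\<in>I. (x i)^3)"
  have S: "(\<Sum>i\<in>I. y i) = S"
    using assms(3) by (simp add: split(1) S_def sum_subtractf)
  have T: "(\<Sum>i\<in>I. (y i)^3) = T"
    using assms(5) by (simp add: split(3) T_def sum_subtractf)
  have PN: "P + N = 1"
    using assms(4) by (simp add: split(2) P_def N_def sum.distrib)
  have S_sq: "S\<^sup>2 \<le> 2 * P"
  proof -
    let ?pos = "{i\<in>I. s i > 0}"
    have "S = (\<Sum>i\<in>?pos. x i)"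
      unfolding S_def by (rule sum.mono_neutral_right) (auto simp: assms(1) x_def)
    then have "S\<^sup>2 \<le> (\<Sum>i\<in>?pos. 1\<^sup>2) * (\<Sum>i\<in>?pos. (x i)\<^sup>2)"
      using Cauchy_Schwarz_ineq_sum[of "\<lambda>_. 1" x ?pos] by simp
    also have "\<dots> \<le> 2 * P"
      unfolding P_def using assms(1,2)
      by (intro mult_mono sum_mono2 sum_nonneg) auto
    finally show ?thesis .
  qed
  have P_sq: "P\<^sup>2 \<le> S * T"
    using sum_power_square_le[OF nonneg(1), of 1]
    by (simp add: P_def S_def T_def power2_eq_square power3_eq_cube mult.assoc)
  have N_sq: "N\<^sup>2 \<le> S * T"
    using sum_power_square_le[OF nonneg(2), of 1]
    by (simp add: N_def power2_eq_square power3_eq_cube mult.assoc flip: S T)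
  have T_sq_pos: "T\<^sup>2 \<le> P * (\<Sum>i\<in>I. (x i)^4)"
    using sum_power_square_le[OF nonneg(1), of 2]
    by (simp add: P_def T_def power2_eq_square power3_eq_cube power4_eq_xxxx mult.assoc)
  have T_sq_neg: "T\<^sup>2 \<le> N * (\<Sum>i\<in>I. (y i)^4)"
    using sum_power_square_le[OF nonneg(2), of 2]
    by (simp add: N_def power2_eq_square power3_eq_cube power4_eq_xxxx mult.assoc flip: T)
  have nonneg_PN: "P \<ge> 0" "N \<ge> 0"
    by (simp_all add: P_def N_def sum_nonneg)
  have "P > 0"
  proof (rule ccontr)
    assume "\<not> P > 0"
    with nonneg_PN have "P = 0" by simp
    with S_sq have "S = 0" by simp
    with N_sq PN \<open>P = 0\<close> show False by simp
  qed
  moreover have "N > 0"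
  proof (rule ccontr)
    assume "\<not> N > 0"
    with nonneg_PN have "N = 0" by simp
    with T_sq_neg have "T = 0" by simp
    with P_sq PN \<open>N = 0\<close> show False by simp
  qed
  moreover have "P * N * (1/4) \<le> P * N * (\<Sum>i\<in>I. (s i)^4)"
  proof -
    have "P * N * (1/4) \<le> T\<^sup>2"
      using split_moments_mult_le[OF nonneg_PN PN S_sq P_sq N_sq] by simp
    also have "\<dots> = N * T\<^sup>2 + P * T\<^sup>2"
      using PN by algebra
    also have "\<dots> \<le> N * (P * (\<Sum>i\<in>I. (x i)^4)) + P * (N * (\<Sum>i\<in>I. (y i)^4))"
      using T_sq_pos T_sq_neg nonneg_PN by (intro add_mono mult_left_mono)
    also have "\<dots> = P * N * (\<Sum>i\<in>I. (s i)^4)"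
      by (simp add: split(4) sum.distrib algebra_simps)
    finally show ?thesis .
  qed
  ultimately show ?thesis
    by simp
qed

lemma quarter_le_sum_fourth_power:
  fixes s :: "'i \<Rightarrow> real"
  assumes "finite I" "card I = 5"
    and "sum s I = 0" "(\<Sum>i\<in>I. (s i)\<^sup>2) = 1" "(\<Sum>i\<in>I. (s i)^3) = 0"
  shows "1/4 \<le> (\<Sum>i\<in>I. (s i)^4)"
proof -
  have "card {i\<in>I. s i > 0} + card {i\<in>I. - s i > 0} \<le> card I"
    using assms(1) by (subst card_Un_disjoint[symmetric]) (auto intro: card_mono)
  then consider "card {i\<in>I. s i > 0} \<le> 2" | "card {i\<in>I. - s i > 0} \<le> 2"
    using assms(2) by linarith
  then show ?thesis
  proof cases
    case 1
    then show ?thesis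
      using quarter_le_sum_fourth_power_two_positive assms(1,3-5) by blast
  next
    case 2
    then show ?thesis
      using quarter_le_sum_fourth_power_two_positive[of I "\<lambda>i. - s i"] assms(1,3-5)
      by (simp add: sum_negf)
  qed
qed

lemma regular_simplex_cylinder_radius_ge:
  fixes p :: "'i \<Rightarrow> 'a::euclidean_space"
  assumes "finite I" "card I = 5" "DIM('a) = 4" "regular_simplex_sqrt2 I p"
    and "circumscribing_cylinder I p a d \<rho>"
  shows "sqrt (49/80) \<le> \<rho>"
proof -
  have d: "d \<noteq> 0" and "\<rho> > 0" and on: "\<And>k. k \<in> I \<Longrightarrow> infdist (p k) (line_through a d) = \<rho>"
    using assms(5) by (auto simp: circumscribing_cylinder_def cylinder_def)
  have dim: "card I = DIM('a) + 1"
    using assms(2,3) by simp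
  define u where "u = sgn d"
  have "line_through a d = line_through a u"
    using d by (simp add: u_def sgn_div_norm line_through_scaleR)
  obtain b where b: "sum b I = 1" "a = (\<Sum>i\<in>I. b i *\<^sub>R p i)"
    using regular_simplex_barycentric[OF assms(1) dim assms(4)] by blast
  obtain b' where b': "sum b' I = 1" "a + u = (\<Sum>i\<in>I. b' i *\<^sub>R p i)"
    using regular_simplex_barycentric[OF assms(1) dim assms(4)] by blast
  define s where "s i = b' i - b i" for i
  have s_sum: "sum s I = 0"
    using b(1) b'(1) by (simp add: s_def sum_subtractf)
  have "u = (\<Sum>i\<in>I. b' i *\<^sub>R p i) - (\<Sum>i\<in>I. b i *\<^sub>R p i)"
    using b(2) b'(2) by (metis add_diff_cancel_left')
  then have u: "u = (\<Sum>i\<in>I. s i *\<^sub>R p i)"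
    by (simp add: s_def scaleR_diff_left sum_subtractf)
  have "(\<Sum>i\<in>I. (s i)\<^sup>2) = u \<bullet> u"
    using inner_sum_regular_simplex[OF assms(1,4) s_sum s_sum] by (simp add: u power2_eq_square)
  also have "\<dots> = 1"
    using d by (simp add: u_def dot_square_norm norm_sgn)
  finally have s_norm: "(\<Sum>i\<in>I. (s i)\<^sup>2) = 1" .
  have "\<rho>\<^sup>2 = 1 - 2 * b k + (\<Sum>i\<in>I. (b i)\<^sup>2) - (s k - (\<Sum>i\<in>I. b i * s i))\<^sup>2" if "k \<in> I" for k
    using infdist_vertex_barycentric[OF assms(1,4) that b(1) s_sum s_norm] on[OF that]
      \<open>line_through a d = line_through a u\<close> by (simp add: b(2) u)
  note identities = cylinder_radius_identities[OF assms(1) _ b(1) s_sum s_norm this]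
  have "I \<noteq> {}"
    using assms(2) by auto
  then have "49/80 \<le> \<rho>\<^sup>2"
    using identities quarter_le_sum_fourth_power[OF assms(1,2) s_sum s_norm] assms(2) by simp
  then have "sqrt (49/80) \<le> sqrt (\<rho>\<^sup>2)"
    by (rule real_sqrt_le_mono)
  then show ?thesis
    using \<open>\<rho> > 0\<close> by simp
qed

lemma regular_simplex_cylinder_witness:
  fixes p :: "'i \<Rightarrow> 'a::real_inner"
  assumes "regular_simplex_sqrt2 I p" "I = {m, i, j, k, l}" "distinct [m, i, j, k, l]"
  shows "circumscribing_cylinder I p ((7/40) *\<^sub>R (\<Sum>t\<in>I. p t) + (1/8) *\<^sub>R p m)
    (p i + p j - p k - p l) (sqrt (49/80))"
proof -
  \<comment> \<open>s is the equality case of the fourth-moment bound; b then comes from the relation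
    b k - (b.s) s k = (3/5 - (s k)^2) / 2 with b.s = 0 (other values of b.s only move the
    base point along the axis).\<close>
  define b where "b t = (7/40 :: real) + (if t = m then 1/8 else 0)" for t :: 'i
  define s where "s t = (if t \<in> {i, j} then 1/2 :: real else if t \<in> {k, l} then -1/2 else 0)" for t :: 'i
  have fin: "finite I"
    using assms(2) by simp
  have sums: "sum b I = 1" "sum s I = 0" "(\<Sum>t\<in>I. (s t)\<^sup>2) = 1"
    "(\<Sum>t\<in>I. (b t)\<^sup>2) = 17/80" "(\<Sum>t\<in>I. b t * s t) = 0"
    using assms(2,3) by (auto simp: b_def s_def power2_eq_square)
  have "(\<Sum>t\<in>I. b t *\<^sub>R p t) = (\<Sum>t\<in>I. (7/40) *\<^sub>R p t + (if t = m then (1/8) *\<^sub>R p t else 0))"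
    by (rule sum.cong) (simp_all add: b_def scaleR_add_left)
  also have "\<dots> = (7/40) *\<^sub>R (\<Sum>t\<in>I. p t) + (1/8) *\<^sub>R p m"
    using fin assms(2) by (simp add: sum.distrib scaleR_sum_right)
  finally have a: "(7/40) *\<^sub>R (\<Sum>t\<in>I. p t) + (1/8) *\<^sub>R p m = (\<Sum>t\<in>I. b t *\<^sub>R p t)" ..
  have d: "p i + p j - p k - p l = 2 *\<^sub>R (\<Sum>t\<in>I. s t *\<^sub>R p t)"
    using assms(2,3) by (auto simp: s_def algebra_simps)
  have on_sq: "(infdist (p t) (line_through (\<Sum>t\<in>I. b t *\<^sub>R p t) (\<Sum>t\<in>I. s t *\<^sub>R p t)))\<^sup>2 = 49/80"
    if "t \<in> I" for t
    using infdist_vertex_barycentric[OF fin assms(1) that sums(1-3)] that assms(2,3)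
    by (auto simp: sums(4,5) b_def s_def power2_eq_square)
  have "infdist (p t) (line_through (\<Sum>t\<in>I. b t *\<^sub>R p t) (\<Sum>t\<in>I. s t *\<^sub>R p t)) = sqrt (49/80)"
    if "t \<in> I" for t
    by (rule real_sqrt_unique[symmetric]) (simp_all add: on_sq that infdist_nonneg)
  moreover have "p i + p j - p k - p l \<noteq> 0"
    using inner_sum_regular_simplex[OF fin assms(1) sums(2) sums(2)] sums(3) d
    by (auto simp: power2_eq_square)
  ultimately show ?thesis
    unfolding circumscribing_cylinder_def cylinder_def a d by (simp add: line_through_scaleR)
qed

lemma regular_simplex_cylinder_attained:
  fixes p :: "'i \<Rightarrow> 'a::real_inner"
  assumes "finite I" "card I = 5" "regular_simplex_sqrt2 I p"
    and "{i, j, k, l} \<subseteq> I" "distinct [i, j, k, l]"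
  shows "\<exists>a. circumscribing_cylinder I p a (p i + p j - p k - p l) (sqrt (49/80))"
proof -
  have "card (I - {i, j, k, l}) = 1"
    using assms by (simp add: card_Diff_subset)
  then obtain m where m: "I - {i, j, k, l} = {m}"
    by (auto simp: card_Suc_eq)
  then have "I = {m, i, j, k, l}" "distinct [m, i, j, k, l]"
    using assms(4,5) by auto
  then show ?thesis
    using regular_simplex_cylinder_witness[OF assms(3)] by blast
qed

theorem mainTheorem11:
  fixes p :: "nat \<Rightarrow> real^4"
  assumes regular: "\<And>i j. i \<in> {1..5} \<Longrightarrow> j \<in> {1..5} \<Longrightarrow> i \<noteq> j \<Longrightarrow> dist (p i) (p j) = sqrt 2"
  shows "(\<forall>a d \<rho>. circumscribing_cylinder {1..5} p a d \<rho> \<longrightarrow> \<rho> \<ge> sqrt (49/80))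
    \<and> (\<exists>a. circumscribing_cylinder {1..5} p a (p 2 + p 3 - p 4 - p 5) (sqrt (49/80)))
    \<and> (\<forall>i j k l. {i, j, k, l} \<subseteq> {1..5} \<and> distinct [i, j, k, l] \<longrightarrow>
         (\<exists>a. circumscribing_cylinder {1..5} p a (p i + p j - p k - p l) (sqrt (49/80))))"
proof -
  have simplex: "regular_simplex_sqrt2 {1..5} p"
    using regular by (simp add: regular_simplex_sqrt2_def)
  have attained: "\<exists>a. circumscribing_cylinder {1..5} p a (p i + p j - p k - p l) (sqrt (49/80))"
    if "{i, j, k, l} \<subseteq> {1..5}" "distinct [i, j, k, l]" for i j k l
    using regular_simplex_cylinder_attained[OF _ _ simplex that] by simp
  show ?thesis
    using regular_simplex_cylinder_radius_ge[OF _ _ _ simplex] attained[of 2 3 4 5] attained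
    by auto
qed

end
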